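(* (i) ATE. Suppose that for some $C<\infty$, $q>2$, $(\mathbb{E}[|Y(z)|^q])^{1/q}\le C$ and $\mathbb{E}[Y(z)^2\mid X=x]\le C$ for $z=0,1$, all $x$, and let $e_1,\dots,e_T\in\mathcal{F}_\gamma$ for some $\gamma>0$, $e_0=\sum_t\kappa_te_t$. With $\tau_0(x)=m_0(1,x)-m_0(0,x)$, $\theta_{0,\mathrm{ATE}}=\mathbb{E}[Y(1)-Y(0)]$, define for a propensity $e$ $$V_{\mathrm{AIPW}}(e)=\mathbb{E}\Big[\frac{v_0(1,X)}{e(X)}+\frac{v_0(0,X)}{1-e(X)}+(\tau_0(X)-\theta_{0,\mathrm{ATE}})^2\Big],$$ $V_{0,\mathrm{AIPW}}=V_{\mathrm{AIPW}}(e_0)$, $V_{t,\mathrm{AIPW}}=V_{\mathrm{AIPW}}(e_t)$ and $V^{(\mathrm{LA})}_{\mathrm{AIPW}}=\big(\sum_{t=1}^T\kappa_tV_{t,\mathrm{AIPW}}^{-1}\big)^{-1}$. Then $V_{0,\mathrm{AIPW}}\le V^{(\mathrm{LA})}_{\mathrm{AIPW}}$. (ii) Partially linear model. Suppose in addition $\|\psi(x)\|\le C$ for all $x$, $v_0(z,x)\ge c>0$ for all $z,x$, $\mathbb{E}[Y(1)-Y(0)\mid X]=\psi(X)^\top\theta_{0,\mathrm{PL}}$, and let $e_1,\dots,e_T\in\mathcal{F}_0$ with $\mathbb{E}[e_0^2(X)(1-e_0(X))^2\psi(X)\psi(X)^\top]$ positive definite. For a propensity $e$ define $$V_{\mathrm{EPL}}(e)=\Big(\mathbb{E}\Big[\frac{e(X)(1-e(X))}{v_0(0,X)e(X)+v_0(1,X)(1-e(X))}\psi(X)\psi(X)^\top\Big]\Big)^{-1},$$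 $V_{0,\mathrm{EPL}}=V_{\mathrm{EPL}}(e_0)$, $V_{t,\mathrm{EPL}}=V_{\mathrm{EPL}}(e_t)$ and $V^{(\mathrm{LA})}_{\mathrm{EPL}}=\big(\sum_t\kappa_tV_{t,\mathrm{EPL}}^{-1}\big)^{-1}$. Then $V_{0,\mathrm{EPL}}\preceq V^{(\mathrm{LA})}_{\mathrm{EPL}}$ in the positive semidefinite order.
   Context: Setting: $T\ge2$ batches with $N_t/N\to\kappa_t\in(0,1)$, $\sum_t\kappa_t=1$. $(X,Y(0),Y(1))\sim P^S$, $X\in\mathcal{X}\subseteq\mathbb{R}^d$, expectations under $P^S$; $m_0(z,x)=\mathbb{E}[Y(z)\mid X=x]$, $v_0(z,x)=\mathrm{Var}(Y(z)\mid X=x)$; $\psi:\mathcal{X}\to\mathbb{R}^p$ known. $\mathcal{F}_\gamma$ is the set of measurable functions $\mathcal{X}\to[\gamma,1-\gamma]$. Interpretation: $V_{0,\cdot}$ is the asymptotic variance of the pooled oracle estimator in a non-adaptive batch experiment with propensities $e_1,\dots,e_T$, $V_{t,\cdot}$ that of the single-batch oracle estimator on batch $t$, and $V^{(\mathrm{LA})}$ that of the optimal inverse-variance-weighted linear aggregation of the single-batch estimators. In (i), the assumption $V_{t,\mathrm{AIPW}}$ scalar and positive; in (ii) each $V_{t,\mathrm{EPL}}^{-1}$ is the matrix inside the inverse. *)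

theory Defs
  imports "HOL-Analysis.Analysis" "HOL-Probability.Probability"
begin

definition sigmaX :: "'w measure \<Rightarrow> ('w \<Rightarrow> 'x::topological_space) \<Rightarrow> 'w measure" where
  "sigmaX M X = vimage_algebra (space M) X borel"

text \<open>g is a (Borel, everywhere defined) version of x |-> E[f | X = x]\<close>
definition cond_exp_version ::
  "'w measure \<Rightarrow> ('w \<Rightarrow> 'x::topological_space) \<Rightarrow> ('w \<Rightarrow> real) \<Rightarrow> ('x \<Rightarrow> real) \<Rightarrow> bool" where
  "cond_exp_version M X f g \<longleftrightarrow>
     g \<in> borel_measurable borel \<and>
     (AE w in M. g (X w) = real_cond_exp M (sigmaX M X) f w)"

definition Fgam :: "real \<Rightarrow> ('x::topological_space \<Rightarrow> real) set" where
  "Fgam \<gamma> = {e. e \<in> borel_measurable borel \<and> (\<forall>x. \<gamma> \<le> e x \<and> e x \<le> 1 - \<gamma>)}"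

definition theta_ATE :: "'w measure \<Rightarrow> (nat \<Rightarrow> 'w \<Rightarrow> real) \<Rightarrow> real" where
  "theta_ATE M Y = (\<integral>w. Y 1 w - Y 0 w \<partial>M)"

definition V_AIPW ::
  "'w measure \<Rightarrow> ('w \<Rightarrow> 'x) \<Rightarrow> (nat \<Rightarrow> 'w \<Rightarrow> real) \<Rightarrow> (nat \<Rightarrow> 'x \<Rightarrow> real)
     \<Rightarrow> (nat \<Rightarrow> 'x \<Rightarrow> real) \<Rightarrow> ('x \<Rightarrow> real) \<Rightarrow> real" where
  "V_AIPW M X Y m0 v0 e =
     (\<integral>w. v0 1 (X w) / e (X w) + v0 0 (X w) / (1 - e (X w))
          + (m0 1 (X w) - m0 0 (X w) - theta_ATE M Y)\<^sup>2 \<partial>M)"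

definition outer :: "real^'p \<Rightarrow> real^'p^'p" where
  "outer u = (\<chi> i j. u $ i * u $ j)"

definition EPL_info ::
  "'w measure \<Rightarrow> ('w \<Rightarrow> 'x) \<Rightarrow> (nat \<Rightarrow> 'x \<Rightarrow> real) \<Rightarrow> ('x \<Rightarrow> real^'p)
     \<Rightarrow> ('x \<Rightarrow> real) \<Rightarrow> real^'p^'p" where
  "EPL_info M X v0 \<psi> e =
     (\<integral>w. (e (X w) * (1 - e (X w))
            / (v0 0 (X w) * e (X w) + v0 1 (X w) * (1 - e (X w)))) *\<^sub>R outer (\<psi> (X w)) \<partial>M)"

definition V_EPL ::
  "'w measure \<Rightarrow> ('w \<Rightarrow> 'x) \<Rightarrow> (nat \<Rightarrow> 'x \<Rightarrow> real) \<Rightarrow> ('x \<Rightarrow> real^'p)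
     \<Rightarrow> ('x \<Rightarrow> real) \<Rightarrow> real^'p^'p" where
  "V_EPL M X v0 \<psi> e = matrix_inv (EPL_info M X v0 \<psi> e)"

definition pos_def_mat :: "real^'p^'p \<Rightarrow> bool" where
  "pos_def_mat A \<longleftrightarrow> (\<forall>x. x \<noteq> 0 \<longrightarrow> 0 < x \<bullet> (A *v x))"

definition psd_le :: "real^'p^'p \<Rightarrow> real^'p^'p \<Rightarrow> bool" where
  "psd_le A B \<longleftrightarrow> (\<forall>x. 0 \<le> x \<bullet> ((B - A) *v x))"

end

theory Submission
  imports Defs
begin

text \<open>
  (i) Fix weights \<open>\<alpha>\<^sub>t \<propto> \<kappa>\<^sub>t / V\<^sub>t\<close> summing to one. Pointwise, Cauchy--Schwarz gives
  \<open>1 / (\<Sum>\<^sub>t \<kappa>\<^sub>t e\<^sub>t) \<le> \<Sum>\<^sub>t (\<alpha>\<^sub>t\<^sup>2 / \<kappa>\<^sub>t) / e\<^sub>t\<close>, likewise with \<open>1 - e\<^sub>t\<close>, and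
  \<open>1 \<le> \<Sum>\<^sub>t \<alpha>\<^sub>t\<^sup>2 / \<kappa>\<^sub>t\<close> for the constant term. Integrating bounds \<open>V\<^sub>0\<close> by
  \<open>\<Sum>\<^sub>t (\<alpha>\<^sub>t\<^sup>2 / \<kappa>\<^sub>t) V\<^sub>t\<close>, which for this choice of \<open>\<alpha>\<close> equals \<open>(\<Sum>\<^sub>t \<kappa>\<^sub>t / V\<^sub>t)\<^sup>-\<^sup>1\<close>.

  (ii) The weight \<open>e (1 - e) / (v\<^sub>0 e + v\<^sub>1 (1 - e))\<close> is concave in \<open>e\<close>, so the
  information matrix of the pooled propensity dominates the \<open>\<kappa>\<close>-average of the single-batch
  information matrices in the Loewner order, and matrix inversion reverses that order.
\<close>

section \<open>The AIPW variance\<close>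

lemma inverse_sum_le_sum_power2_divide:
  fixes p \<alpha> :: "'a \<Rightarrow> real"
  assumes fin: "finite I" and pos: "\<And>t. t \<in> I \<Longrightarrow> 0 < p t" and \<alpha>: "sum \<alpha> I = 1"
  shows "1 / sum p I \<le> (\<Sum>t\<in>I. \<alpha> t ^ 2 / p t)"
proof -
  define P where "P = sum p I"
  have "I \<noteq> {}" using \<alpha> by auto
  then have P: "0 < P" unfolding P_def using fin pos by (simp add: sum_pos)
  have "0 \<le> (\<Sum>t\<in>I. (\<alpha> t - p t / P)\<^sup>2 / p t)"
    by (intro sum_nonneg) (simp add: pos less_imp_le)
  also have "\<dots> = (\<Sum>t\<in>I. \<alpha> t ^ 2 / p t - 2 * \<alpha> t / P + p t / P\<^sup>2)"
  proof (rule sum.cong)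
    fix t assume "t \<in> I"
    with pos have "0 < p t" by blast
    with P show "(\<alpha> t - p t / P)\<^sup>2 / p t = \<alpha> t ^ 2 / p t - 2 * \<alpha> t / P + p t / P\<^sup>2"
      by (simp add: field_simps power2_eq_square)
  qed simp
  also have "\<dots> = (\<Sum>t\<in>I. \<alpha> t ^ 2 / p t) - 1 / P"
    using P \<alpha> unfolding P_def
    by (simp add: sum.distrib sum_subtractf flip: sum_divide_distrib sum_distrib_left)
      (simp add: field_simps power2_eq_square)
  finally show ?thesis unfolding P_def by simp
qed

lemma aipw_integrand_mixture_le:
  fixes \<kappa> \<alpha> e :: "'a \<Rightarrow> real"
  assumes fin: "finite I" and \<kappa>: "\<And>t. t \<in> I \<Longrightarrow> 0 < \<kappa> t" "sum \<kappa> I = 1"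
    and \<alpha>: "sum \<alpha> I = 1" and e: "\<And>t. t \<in> I \<Longrightarrow> 0 < e t \<and> e t < 1"
    and abc: "0 \<le> a" "0 \<le> b" "0 \<le> c"
  shows "a / (\<Sum>t\<in>I. \<kappa> t * e t) + b / (1 - (\<Sum>t\<in>I. \<kappa> t * e t)) + c
    \<le> (\<Sum>t\<in>I. \<alpha> t ^ 2 / \<kappa> t * (a / e t + b / (1 - e t) + c))"
proof -
  have cs: "1 / (\<Sum>t\<in>I. \<kappa> t * x t) \<le> (\<Sum>t\<in>I. \<alpha> t ^ 2 / \<kappa> t / x t)"
    if x: "\<And>t. t \<in> I \<Longrightarrow> 0 < x t" for x
    using inverse_sum_le_sum_power2_divide[OF fin _ \<alpha>, of "\<lambda>t. \<kappa> t * x t"] x \<kappa>(1)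
    by simp
  have "1 / (\<Sum>t\<in>I. \<kappa> t * e t) \<le> (\<Sum>t\<in>I. \<alpha> t ^ 2 / \<kappa> t / e t)"
    using e by (intro cs) simp
  moreover have "1 / (1 - (\<Sum>t\<in>I. \<kappa> t * e t)) \<le> (\<Sum>t\<in>I. \<alpha> t ^ 2 / \<kappa> t / (1 - e t))"
    using cs[of "\<lambda>t. 1 - e t"] e \<kappa>(2) by (simp add: sum_subtractf right_diff_distrib)
  moreover have "1 \<le> (\<Sum>t\<in>I. \<alpha> t ^ 2 / \<kappa> t)"
    using cs[of "\<lambda>_. 1"] \<kappa>(2) by simp
  ultimately have "a * (1 / (\<Sum>t\<in>I. \<kappa> t * e t)) + b * (1 / (1 - (\<Sum>t\<in>I. \<kappa> t * e t))) + c * 1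
    \<le> a * (\<Sum>t\<in>I. \<alpha> t ^ 2 / \<kappa> t / e t) + b * (\<Sum>t\<in>I. \<alpha> t ^ 2 / \<kappa> t / (1 - e t))
      + c * (\<Sum>t\<in>I. \<alpha> t ^ 2 / \<kappa> t)"
    using abc by (intro add_mono mult_left_mono)
  then show ?thesis
    by (simp add: sum_distrib_left sum_distrib_right sum.distrib algebra_simps)
qed

lemma integral_aipw_mixture_le:
  fixes a b c :: "'w \<Rightarrow> real" and \<kappa> :: "'a \<Rightarrow> real" and e :: "'a \<Rightarrow> 'w \<Rightarrow> real"
  assumes fin: "finite I" and \<kappa>: "\<And>t. t \<in> I \<Longrightarrow> 0 < \<kappa> t" "sum \<kappa> I = 1"
    and abc: "AE w in M. 0 \<le> a w" "AE w in M. 0 \<le> b w" "AE w in M. 0 \<le> c w"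
    and e: "\<And>t w. t \<in> I \<Longrightarrow> 0 < e t w \<and> e t w < 1"
    and V_pos: "\<And>t. t \<in> I \<Longrightarrow> 0 < (\<integral>w. a w / e t w + b w / (1 - e t w) + c w \<partial>M)"
  shows "(\<integral>w. a w / (\<Sum>t\<in>I. \<kappa> t * e t w) + b w / (1 - (\<Sum>t\<in>I. \<kappa> t * e t w)) + c w \<partial>M)
    \<le> inverse (\<Sum>t\<in>I. \<kappa> t * inverse (\<integral>w. a w / e t w + b w / (1 - e t w) + c w \<partial>M))"
proof -
  define h where "h t w = a w / e t w + b w / (1 - e t w) + c w" for t w
  define h0 where "h0 w = a w / (\<Sum>t\<in>I. \<kappa> t * e t w) + b w / (1 - (\<Sum>t\<in>I. \<kappa> t * e t w)) + c w"
    for w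
  define V where "V t = integral\<^sup>L M (h t)" for t
  define S where "S = (\<Sum>t\<in>I. \<kappa> t * inverse (V t))"
  define \<alpha> where "\<alpha> t = \<kappa> t * inverse (V t) / S" for t
  have V: "0 < V t" if "t \<in> I" for t
    using V_pos[OF that] unfolding V_def h_def .
  have h_integrable: "integrable M (h t)" if "t \<in> I" for t
    using V[OF that] not_integrable_integral_eq[of M "h t"] unfolding V_def by force
  have "I \<noteq> {}" using \<kappa>(2) by auto
  then have S: "0 < S" unfolding S_def using fin \<kappa>(1) V by (intro sum_pos) auto
  have \<alpha>_sum: "sum \<alpha> I = 1"
    using S unfolding \<alpha>_def S_def by (simp flip: sum_divide_distrib)
  have pointwise: "AE w in M. h0 w \<le> (\<Sum>t\<in>I. \<alpha> t ^ 2 / \<kappa> t * h t w)"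
    using abc unfolding h_def h0_def
    by eventually_elim (rule aipw_integrand_mixture_le[OF fin \<kappa> \<alpha>_sum]; simp add: e)
  have "(\<Sum>t\<in>I. \<alpha> t ^ 2 / \<kappa> t * V t) = (\<Sum>t\<in>I. \<kappa> t * inverse (V t)) / S\<^sup>2"
    unfolding sum_divide_distrib
    using \<kappa>(1) V S by (intro sum.cong) (auto simp: \<alpha>_def field_simps power2_eq_square)
  also have "\<dots> = inverse S"
    using S unfolding S_def[symmetric] by (simp add: power2_eq_square field_simps)
  finally have bound_integral: "(\<integral>w. (\<Sum>t\<in>I. \<alpha> t ^ 2 / \<kappa> t * h t w) \<partial>M) = inverse S"
    using h_integrable unfolding V_def by (simp add: integral_sum)
  have "integral\<^sup>L M h0 \<le> inverse S"
  proof (cases "integrable M h0")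
    case True
    then have "integral\<^sup>L M h0 \<le> (\<integral>w. (\<Sum>t\<in>I. \<alpha> t ^ 2 / \<kappa> t * h t w) \<partial>M)"
      using pointwise h_integrable by (intro integral_mono_AE) auto
    then show ?thesis unfolding bound_integral .
  qed (use S in \<open>simp add: not_integrable_integral_eq\<close>)
  then show ?thesis unfolding h0_def S_def V_def h_def .
qed

section \<open>Concavity of the EPL weight\<close>

definition epl_weight :: "real \<Rightarrow> real \<Rightarrow> real \<Rightarrow> real" where
  "epl_weight a b e = e * (1 - e) / (b * e + a * (1 - e))"

text \<open>\<open>epl_weight a b\<close> is the pointwise minimum over \<open>\<beta>\<close> of these affine functions of \<open>e\<close>,
  hence concave.\<close>

lemma epl_weight_le_affine:
  assumes a: "0 < a" and b: "0 < b" and e: "0 \<le> e" "e \<le> 1"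
  shows "epl_weight a b e \<le> (1 - \<beta>)\<^sup>2 * (e / a) + \<beta>\<^sup>2 * ((1 - e) / b)"
proof -
  define u v where "u = e / a" and "v = (1 - e) / b"
  have "0 \<le> u" "0 \<le> v" using a b e by (auto simp: u_def v_def)
  moreover have "u \<noteq> 0 \<or> v \<noteq> 0" using a b by (auto simp: u_def v_def)
  ultimately have uv: "0 < u + v" by linarith
  have den: "b * e + a * (1 - e) = a * b * (u + v)"
    using a b by (simp add: u_def v_def field_simps)
  have weight: "epl_weight a b e = u * v / (u + v)"
    using a b unfolding epl_weight_def den by (simp add: u_def v_def field_simps)
  have "((1 - \<beta>)\<^sup>2 * u + \<beta>\<^sup>2 * v) * (u + v) - u * v = ((1 - \<beta>) * u - \<beta> * v)\<^sup>2"
    by (simp add: algebra_simps power2_eq_square)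
  then have "u * v \<le> ((1 - \<beta>)\<^sup>2 * u + \<beta>\<^sup>2 * v) * (u + v)"
    by (metis diff_ge_0_iff_ge zero_le_power2)
  with uv show ?thesis unfolding weight u_def[symmetric] v_def[symmetric]
    by (simp add: divide_le_eq)
qed

lemma epl_weight_eq_affine:
  assumes a: "0 < a" and b: "0 < b" and e: "0 \<le> e" "e \<le> 1"
  defines "\<beta> \<equiv> b * e / (b * e + a * (1 - e))"
  shows "epl_weight a b e = (1 - \<beta>)\<^sup>2 * (e / a) + \<beta>\<^sup>2 * ((1 - e) / b)"
proof -
  define D where "D = b * e + a * (1 - e)"
  have "0 \<le> b * e" "0 \<le> a * (1 - e)" using a b e by simp_all
  moreover have "b * e \<noteq> 0 \<or> a * (1 - e) \<noteq> 0" using a b by auto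
  ultimately have D: "0 < D" unfolding D_def by linarith
  have "1 - \<beta> = a * (1 - e) / D" "\<beta> = b * e / D"
    using D unfolding \<beta>_def D_def[symmetric] by (simp_all add: field_simps D_def)
  then have "(1 - \<beta>)\<^sup>2 * (e / a) + \<beta>\<^sup>2 * ((1 - e) / b) = e * (1 - e) * (a * (1 - e) + b * e) / D\<^sup>2"
    using a b D by (simp add: power_divide) (simp add: field_simps power2_eq_square)
  also have "\<dots> = e * (1 - e) / D"
    using D unfolding D_def by (simp add: power2_eq_square add.commute)
  finally show ?thesis unfolding epl_weight_def D_def ..
qed

lemma concave_on_epl_weight:
  assumes "0 < a" "0 < b"
  shows "concave_on {0..1} (epl_weight a b)"
  unfolding concave_on_iff
proof (intro conjI ballI allI impI)
  fix x y u v :: real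
  assume x: "x \<in> {0..1}" and y: "y \<in> {0..1}" and uv: "0 \<le> u" "0 \<le> v" "u + v = 1"
  define m where "m = u *\<^sub>R x + v *\<^sub>R y"
  define \<beta> where "\<beta> = b * m / (b * m + a * (1 - m))"
  let ?L = "\<lambda>e. (1 - \<beta>)\<^sup>2 * (e / a) + \<beta>\<^sup>2 * ((1 - e) / b)"
  have "0 \<le> m" "m \<le> 1"
    using x y uv convex_bound_le[of x 1 y u v] by (auto simp: m_def)
  have "u * epl_weight a b x + v * epl_weight a b y \<le> u * ?L x + v * ?L y"
    using assms x y uv by (intro add_mono mult_left_mono epl_weight_le_affine) auto
  also have "\<dots> = ?L m"
  proof -
    have v: "v = 1 - u" using uv(3) by simp
    show ?thesis unfolding m_def v by (simp add: add_divide_distrib diff_divide_distrib algebra_simps)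
  qed
  also have "\<dots> = epl_weight a b m"
    using assms \<open>0 \<le> m\<close> \<open>m \<le> 1\<close> unfolding \<beta>_def by (rule epl_weight_eq_affine[symmetric])
  finally show "u * epl_weight a b x + v * epl_weight a b y \<le> epl_weight a b (u *\<^sub>R x + v *\<^sub>R y)"
    unfolding m_def .
qed simp

lemma epl_weight_bounds:
  assumes "0 < c" "c \<le> a" "c \<le> b" "0 \<le> e" "e \<le> 1"
  shows "0 \<le> epl_weight a b e" "epl_weight a b e \<le> 1 / c"
proof -
  have den: "c \<le> b * e + a * (1 - e)"
  proof -
    have "c = c * e + c * (1 - e)" by (simp add: algebra_simps)
    also have "\<dots> \<le> b * e + a * (1 - e)" using assms by (intro add_mono mult_right_mono) auto
    finally show ?thesis .
  qed
  have num: "0 \<le> e * (1 - e)" "e * (1 - e) \<le> 1" using assms by (auto simp: mult_le_one)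
  show "0 \<le> epl_weight a b e" unfolding epl_weight_def using num den assms by simp
  have "epl_weight a b e \<le> 1 / (b * e + a * (1 - e))" unfolding epl_weight_def using num den assms
    by (intro divide_right_mono) auto
  also have "\<dots> \<le> 1 / c" using den assms by (intro divide_left_mono) auto
  finally show "epl_weight a b e \<le> 1 / c" .
qed

section \<open>Matrix inversion reverses the Loewner order\<close>

lemma matrix_inv_mult:
  fixes A :: "'a::semiring_1^'n^'m"
  assumes "invertible A"
  shows "A ** matrix_inv A = mat 1" "matrix_inv A ** A = mat 1"
  using someI_ex[OF assms[unfolded invertible_def]] unfolding matrix_inv_def by blast+

lemma matrix_inv_mult_vector:
  fixes A :: "'a::comm_semiring_1^'n^'m"
  assumes "invertible A"
  shows "A *v (matrix_inv A *v x) = x" "matrix_inv A *v (A *v y) = y"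
  by (simp_all add: matrix_vector_mul_assoc matrix_inv_mult[OF assms])

lemma psd_quadratic_form_eq_0_imp_mult_eq_0:
  fixes B :: "real^'n^'n"
  assumes sym: "\<And>y z. y \<bullet> (B *v z) = z \<bullet> (B *v y)"
    and psd: "\<And>y. 0 \<le> y \<bullet> (B *v y)"
    and y: "y \<bullet> (B *v y) = 0"
  shows "B *v y = 0"
proof (rule ccontr)
  define u where "u = B *v y"
  define N where "N = u \<bullet> u"
  define K where "K = u \<bullet> (B *v u)"
  define s where "s = N / (K + 1)"
  assume "B *v y \<noteq> 0"
  then have N: "0 < N" unfolding N_def u_def by simp
  have K: "0 \<le> K" unfolding K_def by (rule psd)
  have s: "0 < s" using N K unfolding s_def by simp
  have "0 \<le> (y - s *\<^sub>R u) \<bullet> (B *v (y - s *\<^sub>R u))" by (rule psd)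
  also have "\<dots> = y \<bullet> (B *v y) - s * (y \<bullet> (B *v u)) - s * (u \<bullet> (B *v y)) + s * s * K"
    unfolding K_def by (simp add: algebra_simps)
  also have "\<dots> = - 2 * s * N + s * s * K"
    using y sym[of y u] unfolding N_def u_def by simp
  finally have "2 * N \<le> s * K" using s by (simp add: mult.assoc)
  also have "s * K < N" using N K unfolding s_def by (simp add: field_simps)
  finally show False using N by simp
qed

text \<open>\<open>x \<bullet> (B\<^sup>-\<^sup>1 *v x)\<close> is the maximum over \<open>y\<close> of \<open>2 (x \<bullet> y) - y \<bullet> (B *v y)\<close>, which is
  antitone in \<open>B\<close>.\<close>

lemma psd_le_matrix_inv_antimono:
  fixes A B :: "real^'n^'n"
  assumes sym: "\<And>y z. y \<bullet> (B *v z) = z \<bullet> (B *v y)"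
    and psd: "\<And>y. 0 \<le> y \<bullet> (B *v y)"
    and B: "invertible B"
    and le: "\<And>y. y \<bullet> (B *v y) \<le> y \<bullet> (A *v y)"
  shows "invertible A" "psd_le (matrix_inv A) (matrix_inv B)"
proof -
  have "y = 0" if "A *v y = 0" for y
  proof -
    have "y \<bullet> (B *v y) = 0" using le[of y] psd[of y] that by simp
    then have "B *v y = 0" by (rule psd_quadratic_form_eq_0_imp_mult_eq_0[OF sym psd])
    then show "y = 0" using matrix_inv_mult_vector(2)[OF B, of y] by simp
  qed
  then show A: "invertible A"
    unfolding invertible_left_inverse matrix_left_invertible_ker by blast
  have B_max: "2 * (x \<bullet> y) - y \<bullet> (B *v y) \<le> x \<bullet> (matrix_inv B *v x)" for x y
  proof -
    define z where "z = matrix_inv B *v x"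
    have Bz: "B *v z = x" unfolding z_def by (rule matrix_inv_mult_vector(1)[OF B])
    have "0 \<le> (y - z) \<bullet> (B *v (y - z))" by (rule psd)
    also have "\<dots> = y \<bullet> (B *v y) - y \<bullet> (B *v z) - z \<bullet> (B *v y) + z \<bullet> (B *v z)"
      by (simp add: algebra_simps)
    also have "\<dots> = y \<bullet> (B *v y) - 2 * (x \<bullet> y) + x \<bullet> z"
      using sym[of z y] Bz by (simp add: inner_commute)
    finally show ?thesis unfolding z_def by simp
  qed
  show "psd_le (matrix_inv A) (matrix_inv B)"
    unfolding psd_le_def
  proof
    fix x
    define y where "y = matrix_inv A *v x"
    have Ay: "A *v y = x" unfolding y_def by (rule matrix_inv_mult_vector(1)[OF A])
    have "x \<bullet> (matrix_inv A *v x) = 2 * (x \<bullet> y) - y \<bullet> (A *v y)"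
      using Ay unfolding y_def by (simp add: inner_commute)
    also have "\<dots> \<le> 2 * (x \<bullet> y) - y \<bullet> (B *v y)" using le[of y] by simp
    also have "\<dots> \<le> x \<bullet> (matrix_inv B *v x)" by (rule B_max)
    finally show "0 \<le> x \<bullet> ((matrix_inv B - matrix_inv A) *v x)"
      by (simp add: matrix_vector_mult_diff_rdistrib inner_diff_right)
  qed
qed

section \<open>The EPL information matrix\<close>

lemma outer_mult_vector: "outer u *v z = (u \<bullet> z) *\<^sub>R u"
  unfolding outer_def
  by (simp add: vec_eq_iff matrix_vector_mult_def inner_vec_def sum_distrib_left algebra_simps)

lemma inner_outer_mult_vector: "y \<bullet> (outer u *v z) = (u \<bullet> y) * (u \<bullet> z)"
  unfolding outer_mult_vector by (simp add: inner_commute)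

lemma norm_outer: "norm (outer u) = (norm u)\<^sup>2"
proof -
  have "outer u $ i = u $ i *\<^sub>R u" for i unfolding outer_def by (simp add: vec_eq_iff)
  then have "norm (outer u) = L2_set (\<lambda>i. norm u * norm (u $ i)) UNIV"
    unfolding norm_vec_def[of "outer u"] by (simp add: mult.commute)
  also have "\<dots> = (norm u)\<^sup>2"
    by (simp add: L2_set_right_distrib[symmetric] power2_eq_square norm_vec_def[of u])
  finally show ?thesis .
qed

lemma bounded_linear_inner_matrix_vector:
  "bounded_linear (\<lambda>A::real^'n^'m. y \<bullet> (A *v z))"
proof -
  have "linear (\<lambda>A::real^'n^'m. y \<bullet> (A *v z))"
    by (rule linearI) (simp_all add: matrix_vector_mult_add_rdistrib inner_add_right
        scaleR_matrix_vector_assoc[symmetric])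
  then show ?thesis by (simp add: linear_conv_bounded_linear)
qed

lemma inner_integral_scaleR_outer:
  fixes H :: "'w \<Rightarrow> real" and P :: "'w \<Rightarrow> real^'p"
  assumes "integrable M (\<lambda>w. H w *\<^sub>R outer (P w))"
  shows "y \<bullet> ((\<integral>w. H w *\<^sub>R outer (P w) \<partial>M) *v z) = (\<integral>w. H w * ((P w \<bullet> y) * (P w \<bullet> z)) \<partial>M)"
    and "integrable M (\<lambda>w. H w * ((P w \<bullet> y) * (P w \<bullet> z)))"
proof -
  have "y \<bullet> ((H w *\<^sub>R outer (P w)) *v z) = H w * ((P w \<bullet> y) * (P w \<bullet> z))" for w
    by (simp add: scaleR_matrix_vector_assoc[symmetric] inner_outer_mult_vector)
  then show "y \<bullet> ((\<integral>w. H w *\<^sub>R outer (P w) \<partial>M) *v z) = (\<integral>w. H w * ((P w \<bullet> y) * (P w \<bullet> z)) \<partial>M)"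
    and "integrable M (\<lambda>w. H w * ((P w \<bullet> y) * (P w \<bullet> z)))"
    using integral_bounded_linear[OF bounded_linear_inner_matrix_vector assms, of y z]
      integrable_bounded_linear[OF bounded_linear_inner_matrix_vector assms, of y z]
    by simp_all
qed

lemma psd_le_matrix_inv_integral_scaleR_outer:
  fixes F G :: "'w \<Rightarrow> real" and P :: "'w \<Rightarrow> real^'p"
  assumes F: "integrable M (\<lambda>w. F w *\<^sub>R outer (P w))"
    and G: "integrable M (\<lambda>w. G w *\<^sub>R outer (P w))"
    and "\<And>w. 0 \<le> G w" "\<And>w. G w \<le> F w"
    and "invertible (\<integral>w. G w *\<^sub>R outer (P w) \<partial>M)"
  shows "psd_le (matrix_inv (\<integral>w. F w *\<^sub>R outer (P w) \<partial>M))
    (matrix_inv (\<integral>w. G w *\<^sub>R outer (P w) \<partial>M))"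
proof (rule psd_le_matrix_inv_antimono)
  show "y \<bullet> ((\<integral>w. G w *\<^sub>R outer (P w) \<partial>M) *v z) = z \<bullet> ((\<integral>w. G w *\<^sub>R outer (P w) \<partial>M) *v y)"
    for y z
    unfolding inner_integral_scaleR_outer[OF G] by (simp add: mult.commute)
  show "0 \<le> y \<bullet> ((\<integral>w. G w *\<^sub>R outer (P w) \<partial>M) *v y)" for y
    unfolding inner_integral_scaleR_outer[OF G] using assms(3) by (simp add: integral_nonneg)
  show "y \<bullet> ((\<integral>w. G w *\<^sub>R outer (P w) \<partial>M) *v y) \<le> y \<bullet> ((\<integral>w. F w *\<^sub>R outer (P w) \<partial>M) *v y)"
    for y
    unfolding inner_integral_scaleR_outer[OF G] inner_integral_scaleR_outer[OF F]
    using assms(4) by (intro integral_mono inner_integral_scaleR_outer F G mult_right_mono) simp_all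
qed fact

text \<open>Here \<open>f\<close> need not be measurable (\<open>\<psi>\<close> is not assumed to be):
  \<open>H *\<^sub>R f = (H / D) *\<^sub>R (D *\<^sub>R f)\<close>.\<close>

lemma integrable_scaleR_vanishing_with:
  fixes f :: "'w \<Rightarrow> 'b::{banach, second_countable_topology}"
  assumes "finite_measure M"
    and Df: "integrable M (\<lambda>w. D w *\<^sub>R f w)"
    and [measurable]: "D \<in> borel_measurable M" "H \<in> borel_measurable M"
    and vanish: "\<And>w. D w = 0 \<Longrightarrow> H w = 0"
    and H: "\<And>w. \<bar>H w\<bar> \<le> K" and f: "\<And>w. norm (f w) \<le> B"
  shows "integrable M (\<lambda>w. H w *\<^sub>R f w)"
proof -
  interpret finite_measure M by fact
  have eq: "(\<lambda>w. H w *\<^sub>R f w) = (\<lambda>w. (H w / D w) *\<^sub>R (D w *\<^sub>R f w))"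
    using vanish by (auto intro!: ext)
  have "(\<lambda>w. H w *\<^sub>R f w) \<in> borel_measurable M"
    unfolding eq using Df by measurable
  moreover have "norm (H w *\<^sub>R f w) \<le> K * B" for w
    using H[of w] f[of w] by (simp add: mult_mono')
  ultimately show ?thesis by (intro integrable_const_bound[where B = "K * B"]) auto
qed

lemma integrable_scaleR_outer_if_pos_def:
  fixes D H :: "'w \<Rightarrow> real" and P :: "'w \<Rightarrow> real^'p"
  assumes "finite_measure M" and pd: "pos_def_mat (\<integral>w. D w *\<^sub>R outer (P w) \<partial>M)"
    and "D \<in> borel_measurable M" "H \<in> borel_measurable M"
    and "\<And>w. D w = 0 \<Longrightarrow> H w = 0" "\<And>w. \<bar>H w\<bar> \<le> K" and P: "\<And>w. norm (P w) \<le> C"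
  shows "integrable M (\<lambda>w. H w *\<^sub>R outer (P w))"
proof (rule integrable_scaleR_vanishing_with)
  have "(\<integral>w. D w *\<^sub>R outer (P w) \<partial>M) \<noteq> 0"
    using pd[unfolded pos_def_mat_def, rule_format, of 1] by auto
  then show "integrable M (\<lambda>w. D w *\<^sub>R outer (P w))"
    using not_integrable_integral_eq by blast
  show "norm (outer (P w)) \<le> C\<^sup>2" for w
    unfolding norm_outer using P[of w] norm_ge_zero by (rule power_mono)
qed (use assms in simp_all)

lemma sum_scaleR_integral_scaleR:
  fixes f :: "'w \<Rightarrow> 'b::{banach, second_countable_topology}"
  assumes "\<And>t. t \<in> I \<Longrightarrow> integrable M (\<lambda>w. F t w *\<^sub>R f w)"
  shows "(\<Sum>t\<in>I. \<kappa> t *\<^sub>R (\<integral>w. F t w *\<^sub>R f w \<partial>M)) = (\<integral>w. (\<Sum>t\<in>I. \<kappa> t * F t w) *\<^sub>R f w \<partial>M)"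
proof -
  have "(\<Sum>t\<in>I. \<kappa> t *\<^sub>R (\<integral>w. F t w *\<^sub>R f w \<partial>M)) = (\<Sum>t\<in>I. \<integral>w. \<kappa> t *\<^sub>R (F t w *\<^sub>R f w) \<partial>M)"
    by (simp only: integral_scaleR_right)
  also have "\<dots> = (\<integral>w. (\<Sum>t\<in>I. \<kappa> t * F t w) *\<^sub>R f w \<partial>M)"
    unfolding scaleR_sum_left scaleR_scaleR[symmetric] using assms
    by (intro Bochner_Integration.integral_sum[symmetric] integrable_scaleR_right)
  finally show ?thesis .
qed

lemma mixture_in_unit_interval:
  fixes \<kappa> e :: "'a \<Rightarrow> real"
  assumes \<kappa>: "\<And>t. t \<in> I \<Longrightarrow> 0 \<le> \<kappa> t" "sum \<kappa> I = 1"
    and e: "\<And>t. t \<in> I \<Longrightarrow> 0 \<le> e t \<and> e t \<le> 1"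
  shows "0 \<le> (\<Sum>t\<in>I. \<kappa> t * e t) \<and> (\<Sum>t\<in>I. \<kappa> t * e t) \<le> 1"
proof
  show "0 \<le> (\<Sum>t\<in>I. \<kappa> t * e t)" using \<kappa> e by (intro sum_nonneg) simp
  have "(\<Sum>t\<in>I. \<kappa> t * e t) \<le> (\<Sum>t\<in>I. \<kappa> t * 1)"
    using \<kappa> e by (intro sum_mono mult_left_mono) auto
  with \<kappa>(2) show "(\<Sum>t\<in>I. \<kappa> t * e t) \<le> 1" by simp
qed

lemma mixture_endpoint_imp_endpoint:
  fixes \<kappa> e :: "'a \<Rightarrow> real"
  assumes fin: "finite I" and \<kappa>: "\<And>t. t \<in> I \<Longrightarrow> 0 < \<kappa> t" "sum \<kappa> I = 1"
    and e: "\<And>t. t \<in> I \<Longrightarrow> 0 \<le> e t \<and> e t \<le> 1"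
    and mix: "(\<Sum>t\<in>I. \<kappa> t * e t) * (1 - (\<Sum>t\<in>I. \<kappa> t * e t)) = 0" and t: "t \<in> I"
  shows "e t * (1 - e t) = 0"
proof -
  have zero: "x t = 0" if "(\<Sum>t\<in>I. \<kappa> t * x t) = 0" "\<And>t. t \<in> I \<Longrightarrow> 0 \<le> x t" for x
  proof -
    have "\<kappa> t * x t = 0"
      using that t \<kappa>(1) sum_nonneg_eq_0_iff[OF fin, of "\<lambda>t. \<kappa> t * x t"] by (auto simp: less_imp_le)
    then show ?thesis using \<kappa>(1)[OF t] by simp
  qed
  have "(\<Sum>t\<in>I. \<kappa> t * (1 - e t)) = 1 - (\<Sum>t\<in>I. \<kappa> t * e t)"
    using \<kappa>(2) by (simp add: sum_subtractf right_diff_distrib)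
  then show ?thesis using mix zero[of e] zero[of "\<lambda>t. 1 - e t"] e by auto
qed

lemma psd_le_epl_information_mixture:
  fixes M :: "'w measure" and a b :: "'w \<Rightarrow> real" and \<kappa> :: "'a \<Rightarrow> real"
    and e :: "'a \<Rightarrow> 'w \<Rightarrow> real" and P :: "'w \<Rightarrow> real^'p" and I :: "'a set"
  defines "e0 \<equiv> \<lambda>w. \<Sum>t\<in>I. \<kappa> t * e t w"
  assumes "prob_space M" and fin: "finite I"
    and \<kappa>: "\<And>t. t \<in> I \<Longrightarrow> 0 < \<kappa> t" "sum \<kappa> I = 1"
    and [measurable]: "a \<in> borel_measurable M" "b \<in> borel_measurable M"
    and e_measurable: "\<And>t. t \<in> I \<Longrightarrow> e t \<in> borel_measurable M"
    and c: "0 < c" "\<And>w. c \<le> a w" "\<And>w. c \<le> b w"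
    and e: "\<And>t w. t \<in> I \<Longrightarrow> 0 \<le> e t w \<and> e t w \<le> 1"
    and P: "\<And>w. norm (P w) \<le> C"
    and pd: "pos_def_mat (\<integral>w. ((e0 w)\<^sup>2 * (1 - e0 w)\<^sup>2) *\<^sub>R outer (P w) \<partial>M)"
    and inv: "invertible (\<Sum>t\<in>I. \<kappa> t *\<^sub>R (\<integral>w. epl_weight (a w) (b w) (e t w) *\<^sub>R outer (P w) \<partial>M))"
  shows "psd_le (matrix_inv (\<integral>w. epl_weight (a w) (b w) (e0 w) *\<^sub>R outer (P w) \<partial>M))
    (matrix_inv (\<Sum>t\<in>I. \<kappa> t *\<^sub>R (\<integral>w. epl_weight (a w) (b w) (e t w) *\<^sub>R outer (P w) \<partial>M)))"
proof -
  interpret prob_space M by fact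
  define F where "F t w = epl_weight (a w) (b w) (e t w)" for t w
  define F0 where "F0 w = epl_weight (a w) (b w) (e0 w)" for w
  define G where "G w = (\<Sum>t\<in>I. \<kappa> t * F t w)" for w
  have \<kappa>_nonneg: "0 \<le> \<kappa> t" if "t \<in> I" for t using \<kappa>(1)[OF that] by simp
  have ab: "0 < a w" "0 < b w" for w using less_le_trans[OF c(1) c(2)] less_le_trans[OF c(1) c(3)] .
  have e0: "0 \<le> e0 w \<and> e0 w \<le> 1" for w
    unfolding e0_def using \<kappa>_nonneg \<kappa>(2) e by (rule mixture_in_unit_interval)
  have F: "0 \<le> F t w \<and> F t w \<le> 1 / c" if "t \<in> I" for t w
    unfolding F_def using c e[OF that] epl_weight_bounds by blast
  have F0: "0 \<le> F0 w \<and> F0 w \<le> 1 / c" for w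
    unfolding F0_def using c e0 epl_weight_bounds by blast
  have G_nonneg: "0 \<le> G w" for w
    unfolding G_def using F \<kappa>_nonneg by (intro sum_nonneg) simp
  have "I \<noteq> {}" using \<kappa>(2) by auto
  then have G_le_F0: "G w \<le> F0 w" for w
    using concave_on_sum[OF fin _ concave_on_epl_weight[OF ab] \<kappa>(2) \<kappa>_nonneg, where y = "\<lambda>t. e t w"] e
    unfolding G_def F_def F0_def e0_def by simp
  have vanish: "F0 w = 0" "\<forall>t\<in>I. F t w = 0" if "(e0 w)\<^sup>2 * (1 - e0 w)\<^sup>2 = 0" for w
  proof -
    from that have "e0 w * (1 - e0 w) = 0" by simp
    then show "F0 w = 0" "\<forall>t\<in>I. F t w = 0"
      using mixture_endpoint_imp_endpoint[OF fin \<kappa>, of "\<lambda>t. e t w"] e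
      unfolding F0_def F_def epl_weight_def e0_def by simp_all
  qed
  have [measurable]: "e0 \<in> borel_measurable M"
    unfolding e0_def by (intro borel_measurable_sum borel_measurable_times borel_measurable_const e_measurable)
  have F_measurable: "F t \<in> borel_measurable M" if "t \<in> I" for t
    using e_measurable[OF that] unfolding F_def epl_weight_def by measurable
  have integrable: "integrable M (\<lambda>w. H w *\<^sub>R outer (P w))"
    if "H \<in> borel_measurable M" "\<And>w. (e0 w)\<^sup>2 * (1 - e0 w)\<^sup>2 = 0 \<Longrightarrow> H w = 0"
      "\<And>w. 0 \<le> H w" "\<And>w. H w \<le> 1 / c" for H
    using that by (intro integrable_scaleR_outer_if_pos_def[OF finite_measure_axioms pd _ _ _ _ P])
      (simp_all add: abs_le_iff)
  have F_integrable: "integrable M (\<lambda>w. F t w *\<^sub>R outer (P w))" if "t \<in> I" for t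
    using F_measurable[OF that] vanish(2) that F[OF that] by (intro integrable) auto
  have F0_integrable: "integrable M (\<lambda>w. F0 w *\<^sub>R outer (P w))"
  proof (rule integrable)
    show "F0 \<in> borel_measurable M" unfolding F0_def epl_weight_def by measurable
  qed (use F0 vanish(1) in auto)
  have G_integrable: "integrable M (\<lambda>w. G w *\<^sub>R outer (P w))"
  proof (rule integrable)
    show "G \<in> borel_measurable M"
      unfolding G_def using F_measurable by (intro borel_measurable_sum borel_measurable_times) auto
    show "G w \<le> 1 / c" for w using G_le_F0[of w] F0[of w] by linarith
  qed (use G_nonneg vanish(2) in \<open>simp_all add: G_def\<close>)
  have "(\<Sum>t\<in>I. \<kappa> t *\<^sub>R (\<integral>w. F t w *\<^sub>R outer (P w) \<partial>M)) = (\<integral>w. G w *\<^sub>R outer (P w) \<partial>M)"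
    unfolding G_def by (rule sum_scaleR_integral_scaleR[OF F_integrable])
  then show ?thesis
    using psd_le_matrix_inv_integral_scaleR_outer[OF F0_integrable G_integrable G_nonneg G_le_F0] inv
    unfolding F_def F0_def by simp
qed

lemma sigma_finite_subalgebra_sigmaX:
  assumes "prob_space M" and "X \<in> borel_measurable M"
  shows "sigma_finite_subalgebra M (sigmaX M X)"
proof -
  interpret prob_space M by fact
  have "subalgebra M (sigmaX M X)"
    unfolding subalgebra_def sigmaX_def using sets_image_in_sets[of M "space M" X borel] assms(2)
    by simp
  then show ?thesis
    by (intro finite_measure_subalgebra_is_sigma_finite finite_measure_subalgebra.intro
        finite_measure_subalgebra_axioms.intro finite_measure_axioms)
qed

lemma cond_exp_version_nonneg:
  assumes "prob_space M" and "X \<in> borel_measurable M"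
    and "f \<in> borel_measurable M" and "\<And>w. 0 \<le> f w"
    and "cond_exp_version M X f g"
  shows "AE w in M. 0 \<le> g (X w)"
proof -
  have "AE w in M. 0 \<le> real_cond_exp M (sigmaX M X) f w"
    using assms(3,4)
    by (intro sigma_finite_subalgebra.real_cond_exp_pos[OF sigma_finite_subalgebra_sigmaX[OF assms(1,2)]])
      simp_all
  moreover have "AE w in M. g (X w) = real_cond_exp M (sigmaX M X) f w"
    using assms(5) unfolding cond_exp_version_def by simp
  ultimately show ?thesis by eventually_elim simp
qed

lemma cond_variance_version_nonneg:
  assumes "prob_space M" and "X \<in> borel_measurable M" and "Y \<in> borel_measurable M"
    and "cond_exp_version M X Y m"
    and "cond_exp_version M X (\<lambda>w. (Y w - m (X w))\<^sup>2) v"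
  shows "AE w in M. 0 \<le> v (X w)"
proof (rule cond_exp_version_nonneg[OF assms(1,2) _ _ assms(5)])
  have [measurable]: "X \<in> borel_measurable M" "Y \<in> borel_measurable M" "m \<in> borel_measurable borel"
    using assms(2-4) unfolding cond_exp_version_def by simp_all
  show "(\<lambda>w. (Y w - m (X w))\<^sup>2) \<in> borel_measurable M" by measurable
qed simp

lemma V_AIPW_mixture_le:
  fixes \<kappa> :: "'a \<Rightarrow> real" and e :: "'a \<Rightarrow> 'x::topological_space \<Rightarrow> real"
  assumes "finite I" and "\<And>t. t \<in> I \<Longrightarrow> 0 < \<kappa> t" and "sum \<kappa> I = 1"
    and "AE w in M. 0 \<le> v0 0 (X w)" and "AE w in M. 0 \<le> v0 1 (X w)"
    and "0 < \<gamma>" and e_Fgam: "\<And>t. t \<in> I \<Longrightarrow> e t \<in> Fgam \<gamma>"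
    and "\<And>t. t \<in> I \<Longrightarrow> 0 < V_AIPW M X Y m0 v0 (e t)"
  shows "V_AIPW M X Y m0 v0 (\<lambda>x. \<Sum>t\<in>I. \<kappa> t * e t x)
    \<le> inverse (\<Sum>t\<in>I. \<kappa> t * inverse (V_AIPW M X Y m0 v0 (e t)))"
proof -
  have "0 < e t x \<and> e t x < 1" if "t \<in> I" for t x
  proof -
    have "\<gamma> \<le> e t x \<and> e t x \<le> 1 - \<gamma>" using e_Fgam[OF that] unfolding Fgam_def by blast
    with \<open>0 < \<gamma>\<close> show ?thesis by linarith
  qed
  with assms show ?thesis
    unfolding V_AIPW_def by (intro integral_aipw_mixture_le) simp_all
qed

lemma V_EPL_mixture_psd_le:
  fixes X :: "'w \<Rightarrow> 'x::topological_space" and \<psi> :: "'x \<Rightarrow> real^'p"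
    and \<kappa> :: "'a \<Rightarrow> real" and e :: "'a \<Rightarrow> 'x \<Rightarrow> real" and I :: "'a set"
  defines "e0 \<equiv> \<lambda>x. \<Sum>t\<in>I. \<kappa> t * e t x"
  assumes "prob_space M" and "X \<in> borel_measurable M" and "finite I"
    and "\<And>t. t \<in> I \<Longrightarrow> 0 < \<kappa> t" and "sum \<kappa> I = 1"
    and v0_measurable: "v0 0 \<in> borel_measurable borel" "v0 1 \<in> borel_measurable borel"
    and "0 < c" and "\<And>z x. z \<in> {0, 1} \<Longrightarrow> c \<le> v0 z x"
    and e_Fgam: "\<And>t. t \<in> I \<Longrightarrow> e t \<in> Fgam 0" and "\<And>x. norm (\<psi> x) \<le> C"
    and "pos_def_mat (\<integral>w. ((e0 (X w))\<^sup>2 * (1 - e0 (X w))\<^sup>2) *\<^sub>R outer (\<psi> (X w)) \<partial>M)"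
    and "invertible (\<Sum>t\<in>I. \<kappa> t *\<^sub>R EPL_info M X v0 \<psi> (e t))"
  shows "psd_le (V_EPL M X v0 \<psi> e0) (matrix_inv (\<Sum>t\<in>I. \<kappa> t *\<^sub>R EPL_info M X v0 \<psi> (e t)))"
  using assms(2-) unfolding V_EPL_def EPL_info_def epl_weight_def[symmetric] e0_def
proof (intro psd_le_epl_information_mixture[where c = c and C = C])
  show "(\<lambda>w. e t (X w)) \<in> borel_measurable M" if "t \<in> I" for t
    using e_Fgam[OF that] assms(3) unfolding Fgam_def by (auto intro: measurable_compose)
  show "(\<lambda>w. v0 0 (X w)) \<in> borel_measurable M" "(\<lambda>w. v0 1 (X w)) \<in> borel_measurable M"
    using assms(3) v0_measurable by (auto intro: measurable_compose)
qed (simp_all add: Fgam_def)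

theorem theorem1:
  fixes M :: "'w measure"
    and X :: "'w \<Rightarrow> real^'d"
    and Y :: "nat \<Rightarrow> 'w \<Rightarrow> real"
    and m0 v0 s0 :: "nat \<Rightarrow> real^'d \<Rightarrow> real"
    and \<psi> :: "real^'d \<Rightarrow> real^'p"
    and T :: nat and \<kappa> :: "nat \<Rightarrow> real"
    and e :: "nat \<Rightarrow> real^'d \<Rightarrow> real"
    and C q :: real
  defines "e0 \<equiv> (\<lambda>x. \<Sum>t\<in>{1..T}. \<kappa> t * e t x)"
  assumes "prob_space M"
    and "X \<in> borel_measurable M"
    and "\<And>z. z \<in> {0, 1} \<Longrightarrow> Y z \<in> borel_measurable M"
    and "T \<ge> 2"
    and "\<And>t. t \<in> {1..T} \<Longrightarrow> 0 < \<kappa> t \<and> \<kappa> t < 1"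
    and "(\<Sum>t\<in>{1..T}. \<kappa> t) = 1"
    \<comment> \<open>m0, v0 are versions of E[Y(z)|X=x], Var(Y(z)|X=x); s0 of E[Y(z)^2|X=x]\<close>
    and "\<And>z. z \<in> {0, 1} \<Longrightarrow> cond_exp_version M X (Y z) (m0 z)"
    and "\<And>z. z \<in> {0, 1} \<Longrightarrow>
           cond_exp_version M X (\<lambda>w. (Y z w - m0 z (X w))\<^sup>2) (v0 z)"
    and "\<And>z. z \<in> {0, 1} \<Longrightarrow> cond_exp_version M X (\<lambda>w. (Y z w)\<^sup>2) (s0 z)"
    and "q > 2"
    and "\<And>z. z \<in> {0, 1} \<Longrightarrow> integrable M (\<lambda>w. \<bar>Y z w\<bar> powr q)"
    and "\<And>z. z \<in> {0, 1} \<Longrightarrow> (\<integral>w. \<bar>Y z w\<bar> powr q \<partial>M) powr (1 / q) \<le> C"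
    and "\<And>z x. z \<in> {0, 1} \<Longrightarrow> s0 z x \<le> C"
  shows
    "(\<forall>\<gamma>>0. (\<forall>t\<in>{1..T}. e t \<in> Fgam \<gamma>)
        \<and> (\<forall>t\<in>{1..T}. 0 < V_AIPW M X Y m0 v0 (e t))
        \<longrightarrow> V_AIPW M X Y m0 v0 e0
            \<le> inverse (\<Sum>t\<in>{1..T}. \<kappa> t * inverse (V_AIPW M X Y m0 v0 (e t))))
     \<and>
     (\<forall>c (\<theta>::real^'p).
        (\<forall>x. norm (\<psi> x) \<le> C)
        \<and> c > 0 \<and> (\<forall>z\<in>{0, 1}. \<forall>x. c \<le> v0 z x)
        \<and> cond_exp_version M X (\<lambda>w. Y 1 w - Y 0 w) (\<lambda>x. \<psi> x \<bullet> \<theta>)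
        \<and> (\<forall>t\<in>{1..T}. e t \<in> Fgam 0)
        \<and> pos_def_mat (\<integral>w. ((e0 (X w))\<^sup>2 * (1 - e0 (X w))\<^sup>2) *\<^sub>R outer (\<psi> (X w)) \<partial>M)
        \<and> invertible (\<Sum>t\<in>{1..T}. \<kappa> t *\<^sub>R EPL_info M X v0 \<psi> (e t))
        \<longrightarrow> psd_le (V_EPL M X v0 \<psi> e0)
                   (matrix_inv (\<Sum>t\<in>{1..T}. \<kappa> t *\<^sub>R EPL_info M X v0 \<psi> (e t))))"
proof -
  \<comment> \<open>The moment bounds, \<open>s0\<close> and the partially linear model serve the asymptotic theory;
    comparing the variances does not need them.\<close>
  have v0_nonneg: "AE w in M. 0 \<le> v0 z (X w)" if "z \<in> {0, 1}" for z
    using assms(2,3) assms(4,8,9)[OF that] by (rule cond_variance_version_nonneg)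
  have v0_measurable: "v0 z \<in> borel_measurable borel" if "z \<in> {0, 1}" for z
    using assms(9)[OF that] unfolding cond_exp_version_def by simp
  have \<kappa>_pos: "\<And>t. t \<in> {1..T} \<Longrightarrow> 0 < \<kappa> t" using assms(6) by blast
  show ?thesis
  proof (intro conjI allI impI; elim conjE)
    fix \<gamma> :: real
    assume "0 < \<gamma>" and "\<forall>t\<in>{1..T}. e t \<in> Fgam \<gamma>"
      and "\<forall>t\<in>{1..T}. 0 < V_AIPW M X Y m0 v0 (e t)"
    then show "V_AIPW M X Y m0 v0 e0
      \<le> inverse (\<Sum>t\<in>{1..T}. \<kappa> t * inverse (V_AIPW M X Y m0 v0 (e t)))"
      unfolding e0_def using \<kappa>_pos assms(7) v0_nonneg by (intro V_AIPW_mixture_le) auto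
  next
    fix c and \<theta> :: "real^'p"
    assume "\<forall>x. norm (\<psi> x) \<le> C" and "0 < c" and "\<forall>z\<in>{0, 1}. \<forall>x. c \<le> v0 z x"
      and "\<forall>t\<in>{1..T}. e t \<in> Fgam 0"
      and "pos_def_mat (\<integral>w. ((e0 (X w))\<^sup>2 * (1 - e0 (X w))\<^sup>2) *\<^sub>R outer (\<psi> (X w)) \<partial>M)"
      and "invertible (\<Sum>t\<in>{1..T}. \<kappa> t *\<^sub>R EPL_info M X v0 \<psi> (e t))"
    then show "psd_le (V_EPL M X v0 \<psi> e0)
      (matrix_inv (\<Sum>t\<in>{1..T}. \<kappa> t *\<^sub>R EPL_info M X v0 \<psi> (e t)))"
      unfolding e0_def using assms(2,3,7) \<kappa>_pos v0_measurable
      by (intro V_EPL_mixture_psd_le[where C = C]) auto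
  qed
qed

end
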